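(* Let $a,b$ be polynomials with $a(0)\ne0$, $b(0)\ne0$, and $a(z)a^*(z)=b(z)b^*(z)$ for infinitely many $z\in\mathbb C^*$. Then $a$ and $b$ have the same degree $m$. Let $C_a,C_b$ be their leading coefficients, $\mathcal R_a=\{\alpha_1,\dots,\alpha_m\}$, $\mathcal R_b=\{\beta_1,\dots,\beta_m\}$ the multisets of their zeros, $\mathcal R_{ab}$ the multiset of common zeros, $\overline{\mathcal R}_a:=\mathcal R_a\setminus\mathcal R_{ab}$, $\overline{\mathcal R}_b:=\mathcal R_b\setminus\mathcal R_{ab}$. Then: (a) the multisets $\{\alpha_1,\dots,\alpha_m,1/\overline{\alpha_1},\dots,1/\overline{\alpha_m}\}$ and $\{\beta_1,\dots,\beta_m,1/\overline{\beta_1},\dots,1/\overline{\beta_m}\}$ are equal; (b) $\mathcal R_a,\mathcal R_b,\mathcal R_{ab}$ have the same multiplicity for each zero on the unit circle $\mathbb T$, and $\overline{\mathcal R}_a,\overline{\mathcal R}_b$ contain no element of $\mathbb T$; (c) if $y\in\overline{\mathcal R}_a$ with multiplicity $k$, then $y\notin\overline{\mathcal R}_b$, $1/\overline y\notin\overline{\mathcal R}_a$, and $1/\overline y\in\overline{\mathcal R}_b$ with multiplicity $k$ (and symmetrically with $a,b$ exchanged); (d) $|\overline{\mathcal R}_a|=|\overline{\mathcal R}_b|$ and $\prod_{y\in\overline{\mathcal R}_a}y=\prod_{y\in\overline{\mathcal R}_b}1/\overline y$; (e) $C_b=\lambda C_a\big|\prod_{y\in\overline{\mathcal R}_a}y\big|$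 for some $\lambda\in\mathbb T$; (f) for a fixed polynomial $a$ with $a(0)\ne0$, the number of polynomials $b$ satisfying the hypotheses together with $b(0)\in\mathbb R$, $b(0)>0$ (respectively $b(0)<0$) equals $\mathcal N(R)$, where $R:=\{\alpha_1,\dots,\alpha_m,1/\overline{\alpha_1},\dots,1/\overline{\alpha_m}\}$.
   Context: $\mathbb T$ is the unit circle, $\mathbb C^*=\mathbb C\setminus\{0\}$, and for a Laurent polynomial $a$, $a^*(z):=\overline{a(1/\overline z)}$. Multisets: $B\subseteq A$ means each multiplicity in $B$ is at most that in $A$, and $A\setminus B$ is the unique multiset with $(A\setminus B)\cup B=A$. Counting function: for a finite multiset $R\subset\mathbb C^*$, define the equivalence relation $\alpha\sim\beta$ iff $\alpha=\beta$ or $\alpha=1/\overline\beta$, and suppose every equivalence class (counted as a multiset) has even size. For a class $y$, set $\sharp(y):=1$ if $y$ meets $\mathbb T$ and $\sharp(y):=1+|y|/2$ otherwise; then $\mathcal N(R):=\prod_{y\in R/\sim}\sharp(y)$. *)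

theory Defs
  imports "HOL-Analysis.Analysis" "HOL-Computational_Algebra.Fundamental_Theorem_Algebra"
begin

definition refl_T :: "complex \<Rightarrow> complex" where
  "refl_T z = 1 / cnj z"

definition star_eval :: "complex poly \<Rightarrow> complex \<Rightarrow> complex" where
  "star_eval a z = cnj (poly a (1 / cnj z))"

definition same_modsq :: "complex poly \<Rightarrow> complex poly \<Rightarrow> bool" where
  "same_modsq a b \<longleftrightarrow>
     infinite {z. z \<noteq> 0 \<and> poly a z * star_eval a z = poly b z * star_eval b z}"

definition eq_class :: "complex multiset \<Rightarrow> complex \<Rightarrow> complex multiset" where
  "eq_class R \<alpha> = filter_mset (\<lambda>\<beta>. \<beta> = \<alpha> \<or> \<beta> = refl_T \<alpha>) R"

definition classes :: "complex multiset \<Rightarrow> complex multiset set" where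
  "classes R = eq_class R ` set_mset R"

definition sharp :: "complex multiset \<Rightarrow> nat" where
  "sharp y = (if \<exists>z\<in>#y. norm z = 1 then 1 else 1 + size y div 2)"

definition count_N :: "complex multiset \<Rightarrow> nat" where
  "count_N R = (\<Prod>y\<in>classes R. sharp y)"

end

theory Submission
  imports Defs
begin

text \<open>
  Write \<open>Q\<^sub>a(z) = z\<^sup>m a(z) a\<^sup>*(z)\<close> with \<open>m = deg a\<close>. It is the polynomial
  \<open>a \<cdot> a\<^sup>#\<close>, where \<open>a\<^sup>#\<close> is the reversed conjugate polynomial, whose roots are the
  reflections \<open>1/conj \<alpha>\<close> of the roots of \<open>a\<close>. Polynomials agreeing at infinitely many points
  coincide, and since \<open>Q\<^sub>a(0), Q\<^sub>b(0) \<noteq> 0\<close> the hypothesis becomes \<open>deg a = deg b\<close>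
  and \<open>Q\<^sub>a = Q\<^sub>b\<close>. Comparing roots gives (a), and (b)--(d) follow by comparing
  multiplicities at each pair \<open>{y, 1/conj y}\<close>; comparing leading coefficients gives (e).
  For (f), \<open>b\<close> is determined by its roots up to a unimodular factor, which the sign of
  \<open>b(0)\<close> fixes, and its root multiset can be any solution \<open>S\<close> of \<open>S + S\<^bsup>refl\<^esup> = R\<close>. These
  solutions are counted class by class: a class on the unit circle has one solution, a class
  consisting of \<open>y\<close> and \<open>1/conj y\<close>, each \<open>n\<close> times, off the circle has \<open>n + 1\<close>.
\<close>

section \<open>Reflection in the unit circle\<close>

lemma refl_T_refl_T [simp]: "refl_T (refl_T z) = z"
  by (simp add: refl_T_def)

lemma refl_T_eq_iff: "refl_T x = refl_T y \<longleftrightarrow> x = y"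
  by (metis refl_T_refl_T)

lemma refl_T_eq_0_iff [simp]: "refl_T z = 0 \<longleftrightarrow> z = 0"
  by (simp add: refl_T_def)

lemma refl_T_mult: "refl_T (x * y) = refl_T x * refl_T y"
  by (simp add: refl_T_def)

lemma norm_refl_T: "norm (refl_T z) = inverse (norm z)"
  by (simp add: refl_T_def norm_divide inverse_eq_divide)

lemma prod_mset_image_refl_T: "prod_mset (image_mset refl_T M) = refl_T (prod_mset M)"
  by (induction M) (simp_all add: refl_T_mult, simp add: refl_T_def)

text \<open>The hypothesis is needed because \<open>refl_T 0 = 0\<close> (division by zero yields zero).\<close>

lemma refl_T_eq_self_iff:
  assumes "z \<noteq> 0"
  shows "refl_T z = z \<longleftrightarrow> norm z = 1"
proof -
  have "refl_T z = z \<longleftrightarrow> z * cnj z = 1"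
    using assms by (auto simp: refl_T_def field_simps)
  also have "\<dots> \<longleftrightarrow> norm z ^ 2 = 1"
    by (metis complex_norm_square of_real_eq_1_iff)
  finally show ?thesis
    by (simp add: abs_square_eq_1)
qed

lemma refl_T_unit_circle: "norm z = 1 \<Longrightarrow> refl_T z = z"
  by (subst refl_T_eq_self_iff) auto

section \<open>Multisets with equal symmetrizations under an involution\<close>

lemma count_image_mset_involution:
  assumes "\<And>x. f (f x) = x"
  shows "count (image_mset f M) x = count M (f x)"
  by (induction M) (use assms in auto)

lemma count_image_refl_T: "count (image_mset refl_T M) x = count M (refl_T x)"
  by (simp add: count_image_mset_involution)

lemma zero_in_image_refl_T_iff: "0 \<in># image_mset refl_T M \<longleftrightarrow> 0 \<in># M"
  by (metis count_greater_zero_iff count_image_refl_T refl_T_eq_0_iff)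

lemma count_add_image_involution_eq:
  assumes inv: "\<And>x. f (f x) = x" and eq: "A + image_mset f A = B + image_mset f B"
  shows "count A x + count A (f x) = count B x + count B (f x)"
  using arg_cong[OF eq, of "\<lambda>M. count M x"] by (simp add: count_image_mset_involution[OF inv])

lemma diff_inter_eq_image_involution:
  assumes inv: "\<And>x. f (f x) = x" and eq: "A + image_mset f A = B + image_mset f B"
  shows "B - A \<inter># B = image_mset f (A - A \<inter># B)"
proof (rule multiset_eqI)
  fix x
  show "count (B - A \<inter># B) x = count (image_mset f (A - A \<inter># B)) x"
    using count_add_image_involution_eq[OF inv eq, of x]
    by (simp add: count_image_mset_involution[OF inv])
qed

lemma diff_inter_involution_mirror:
  assumes inv: "\<And>x. f (f x) = x" and eq: "A + image_mset f A = B + image_mset f B"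
    and y: "y \<in># A - A \<inter># B"
  shows "y \<notin># B - A \<inter># B \<and> f y \<notin># A - A \<inter># B
    \<and> count (B - A \<inter># B) (f y) = count (A - A \<inter># B) y"
proof -
  have mirror: "count (B - A \<inter># B) x = count (A - A \<inter># B) (f x)" for x
    using diff_inter_eq_image_involution[OF inv eq]
    by (simp add: count_image_mset_involution[OF inv])
  have "y \<notin># B - A \<inter># B"
    using y by (simp add: in_diff_count)
  with mirror[of y] show ?thesis
    using mirror[of "f y"] inv by (simp add: not_in_iff)
qed

lemma count_eq_at_fixed_point_involution:
  assumes inv: "\<And>x. f (f x) = x" and eq: "A + image_mset f A = B + image_mset f B"
    and "f z = z"
  shows "count A z = count B z"
  using count_add_image_involution_eq[OF inv eq, of z] \<open>f z = z\<close> by simp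

section \<open>The polynomial \<open>z\<^sup>m a(z) a\<^sup>*(z)\<close>\<close>

lemma zero_not_in_proots: "poly p 0 \<noteq> 0 \<Longrightarrow> 0 \<notin># proots p"
  by (cases "p = 0") auto

definition root_poly :: "complex multiset \<Rightarrow> complex poly" where
  "root_poly S = (\<Prod>x\<in>#S. [:-x, 1:])"

lemma root_poly_empty [simp]: "root_poly {#} = 1"
  by (simp add: root_poly_def)

lemma root_poly_add_mset [simp]: "root_poly (add_mset x S) = [:-x, 1:] * root_poly S"
  by (simp add: root_poly_def)

lemma root_poly_nonzero [simp]: "root_poly S \<noteq> 0"
  by (induction S) (simp_all del: mult_pCons_left)

lemma proots_root_poly [simp]: "proots (root_poly S) = S"
  by (induction S) (simp_all add: proots_mult del: mult_pCons_left)

lemma degree_root_poly [simp]: "degree (root_poly S) = size S"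
  by (induction S) (simp_all add: degree_mult_eq del: mult_pCons_left)

lemma poly_root_poly_0: "poly (root_poly S) 0 = (-1) ^ size S * prod_mset S"
  by (induction S) (simp_all del: mult_pCons_left)

lemma smult_lead_coeff_root_poly_proots: "smult (lead_coeff p) (root_poly (proots p)) = p"
  unfolding root_poly_def by (rule complex_poly_decompose_multiset)

lemma eq_smult_if_proots_eq:
  fixes p q :: "complex poly"
  assumes "p \<noteq> 0" and "proots p = proots q"
  shows "q = smult (lead_coeff q / lead_coeff p) p"
  using assms smult_lead_coeff_root_poly_proots[of p] smult_lead_coeff_root_poly_proots[of q]
  by (metis leading_coeff_0_iff nonzero_divide_eq_eq smult_smult)

lemma poly_0_eq_prod_proots:
  "poly p 0 = lead_coeff p * (-1) ^ degree p * prod_mset (proots (p :: complex poly))"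
  using arg_cong[OF smult_lead_coeff_root_poly_proots[of p], of "\<lambda>q. poly q 0"]
  by (cases "p = 0") (simp_all add: poly_root_poly_0 size_proots_complex mult.assoc)

definition conj_reciprocal :: "complex poly \<Rightarrow> complex poly" where
  "conj_reciprocal p = reflect_poly (map_poly cnj p)"

lemma map_poly_cnj_mult: "map_poly cnj (p * q) = map_poly cnj p * map_poly cnj q"
  by (rule poly_eq_poly_eq_iff[THEN iffD1]) (auto simp: fun_eq_iff)

lemma conj_reciprocal_mult: "conj_reciprocal (p * q) = conj_reciprocal p * conj_reciprocal q"
  by (simp add: conj_reciprocal_def map_poly_cnj_mult reflect_poly_mult)

lemma conj_reciprocal_smult: "conj_reciprocal (smult c p) = smult (cnj c) (conj_reciprocal p)"
  by (simp add: conj_reciprocal_def map_poly_smult reflect_poly_smult)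

lemma conj_reciprocal_eq_0_iff [simp]: "conj_reciprocal p = 0 \<longleftrightarrow> p = 0"
  by (simp add: conj_reciprocal_def map_poly_eq_0_iff)

lemma coeff_0_conj_reciprocal: "coeff (conj_reciprocal p) 0 = cnj (lead_coeff p)"
  by (simp add: conj_reciprocal_def degree_map_poly coeff_map_poly)

lemma lead_coeff_conj_reciprocal:
  "poly p 0 \<noteq> 0 \<Longrightarrow> lead_coeff (conj_reciprocal p) = cnj (poly p 0)"
  by (simp add: conj_reciprocal_def degree_map_poly coeff_map_poly poly_0_coeff_0
      coeff_reflect_poly)

lemma poly_conj_reciprocal:
  "z \<noteq> 0 \<Longrightarrow> poly (conj_reciprocal p) z = z ^ degree p * star_eval p z"
  by (simp add: conj_reciprocal_def star_eval_def poly_reflect_poly_nz degree_map_poly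
      inverse_eq_divide)

lemma conj_reciprocal_root_poly:
  "0 \<notin># S \<Longrightarrow>
    conj_reciprocal (root_poly S) = smult (\<Prod>s\<in>#S. - cnj s) (root_poly (image_mset refl_T S))"
proof (induction S)
  case (add x S)
  have linear: "conj_reciprocal [:-x, 1:] = smult (- cnj x) [:-refl_T x, 1:]"
    using add.prems by (simp add: conj_reciprocal_def map_poly_pCons reflect_poly_def refl_T_def)
  have "conj_reciprocal (root_poly (add_mset x S))
      = smult (- cnj x) [:-refl_T x, 1:] * smult (\<Prod>s\<in>#S. - cnj s) (root_poly (image_mset refl_T S))"
    using add by (simp only: root_poly_add_mset conj_reciprocal_mult linear) simp
  then show ?case
    by (simp add: mult_ac del: mult_pCons_left smult_pCons)
qed (simp add: conj_reciprocal_def)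

lemma proots_conj_reciprocal:
  assumes "poly p 0 \<noteq> 0"
  shows "proots (conj_reciprocal p) = image_mset refl_T (proots p)"
proof -
  have "p \<noteq> 0" and "0 \<notin># proots p"
    using assms zero_not_in_proots by auto
  then have "conj_reciprocal p = smult (cnj (lead_coeff p) * (\<Prod>s\<in>#proots p. - cnj s))
      (root_poly (image_mset refl_T (proots p)))"
    by (metis conj_reciprocal_root_poly conj_reciprocal_smult smult_lead_coeff_root_poly_proots
        smult_smult)
  moreover have "cnj (lead_coeff p) * (\<Prod>s\<in>#proots p. - cnj s) \<noteq> 0"
    using \<open>p \<noteq> 0\<close> \<open>0 \<notin># proots p\<close> by auto
  ultimately show ?thesis
    by (simp only: proots_smult proots_root_poly not_False_eq_True)
qed

definition modsq_poly :: "complex poly \<Rightarrow> complex poly" where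
  "modsq_poly p = p * conj_reciprocal p"

lemma modsq_poly_eq_0_iff [simp]: "modsq_poly p = 0 \<longleftrightarrow> p = 0"
  by (simp add: modsq_poly_def)

lemma poly_modsq_poly:
  "z \<noteq> 0 \<Longrightarrow> poly (modsq_poly p) z = z ^ degree p * (poly p z * star_eval p z)"
  by (simp add: modsq_poly_def poly_conj_reciprocal)

lemma poly_modsq_poly_0: "poly (modsq_poly p) 0 = poly p 0 * cnj (lead_coeff p)"
  by (simp add: modsq_poly_def poly_0_coeff_0 coeff_mult_0 coeff_0_conj_reciprocal)

lemma star_eval_unit_circle:
  assumes "norm z = 1"
  shows "star_eval p z = cnj (poly p z)"
  using refl_T_unit_circle[OF assms] by (simp add: star_eval_def refl_T_def)

lemma poly_modsq_poly_unit_circle: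
  assumes "norm z = 1"
  shows "poly (modsq_poly p) z = z ^ degree p * of_real ((norm (poly p z))\<^sup>2)"
proof -
  have "z \<noteq> 0"
    using assms by auto
  with assms show ?thesis
    by (simp add: poly_modsq_poly star_eval_unit_circle complex_norm_square del: of_real_power)
qed

lemma modsq_poly_smult: "modsq_poly (smult k p) = smult (of_real ((norm k)\<^sup>2)) (modsq_poly p)"
  by (simp add: modsq_poly_def conj_reciprocal_smult complex_norm_square mult_ac del: of_real_power)

lemma lead_coeff_modsq_poly:
  "poly p 0 \<noteq> 0 \<Longrightarrow> lead_coeff (modsq_poly p) = lead_coeff p * cnj (poly p 0)"
  by (simp add: modsq_poly_def lead_coeff_mult lead_coeff_conj_reciprocal)

lemma proots_modsq_poly:
  "poly p 0 \<noteq> 0 \<Longrightarrow> proots (modsq_poly p) = proots p + image_mset refl_T (proots p)"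
  by (cases "p = 0") (simp_all add: modsq_poly_def proots_mult proots_conj_reciprocal)

lemma monom_1_mult_cancel:
  fixes p q :: "'a :: idom poly"
  assumes "poly p 0 \<noteq> 0" and "poly q 0 \<noteq> 0" and "monom 1 m * p = monom 1 n * q"
  shows "m = n \<and> p = q"
proof -
  have order_0: "order 0 (monom 1 k * r) = k" if "poly r 0 \<noteq> 0" for k and r :: "'a poly"
  proof -
    have "r \<noteq> 0"
      using that by auto
    with that show ?thesis
      using order_power_n_n[of 0 k] by (simp add: order_mult monom_altdef order_0I)
  qed
  then have "m = n"
    using assms by metis
  with assms(3) show ?thesis
    by simp
qed

lemma infinite_nonzero_complex: "infinite {z :: complex. z \<noteq> 0}"
proof -
  have "{z :: complex. z \<noteq> 0} = UNIV - {0}"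
    by auto
  then show ?thesis
    by (simp add: infinite_UNIV_char_0)
qed

lemma same_modsq_iff:
  assumes "poly a 0 \<noteq> 0" and "poly b 0 \<noteq> 0"
  shows "same_modsq a b \<longleftrightarrow> degree a = degree b \<and> modsq_poly a = modsq_poly b"
proof
  assume eq: "degree a = degree b \<and> modsq_poly a = modsq_poly b"
  have "poly a z * star_eval a z = poly b z * star_eval b z" if "z \<noteq> 0" for z
  proof -
    have "z ^ degree a * (poly a z * star_eval a z) = z ^ degree a * (poly b z * star_eval b z)"
      using eq by (metis poly_modsq_poly[OF that])
    with that show ?thesis
      by simp
  qed
  then have "{z. z \<noteq> 0} \<subseteq> {z. z \<noteq> 0 \<and> poly a z * star_eval a z = poly b z * star_eval b z}"
    by blast
  then show "same_modsq a b"
    unfolding same_modsq_def using infinite_nonzero_complex infinite_super by blast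
next
  assume "same_modsq a b"
  define D where
    "D = monom 1 (degree b) * modsq_poly a - monom 1 (degree a) * modsq_poly b"
  have "{z. z \<noteq> 0 \<and> poly a z * star_eval a z = poly b z * star_eval b z} \<subseteq> {z. poly D z = 0}"
    by (auto simp: D_def poly_monom poly_modsq_poly)
  with \<open>same_modsq a b\<close> have "D = 0"
    unfolding same_modsq_def using poly_roots_finite finite_subset by blast
  then have "monom 1 (degree b) * modsq_poly a = monom 1 (degree a) * modsq_poly b"
    by (simp add: D_def)
  moreover have "poly (modsq_poly a) 0 \<noteq> 0" and "poly (modsq_poly b) 0 \<noteq> 0"
    using assms by (auto simp: poly_modsq_poly_0)
  ultimately show "degree a = degree b \<and> modsq_poly a = modsq_poly b"
    using monom_1_mult_cancel by metis
qed

lemma degree_eq_if_same_modsq: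
  "poly a 0 \<noteq> 0 \<Longrightarrow> poly b 0 \<noteq> 0 \<Longrightarrow> same_modsq a b \<Longrightarrow> degree a = degree b"
  by (simp add: same_modsq_iff)

lemma proots_sym_eq_if_same_modsq:
  assumes "poly a 0 \<noteq> 0" and "poly b 0 \<noteq> 0" and "same_modsq a b"
  shows "proots a + image_mset refl_T (proots a) = proots b + image_mset refl_T (proots b)"
  using assms by (metis same_modsq_iff proots_modsq_poly)

lemma lead_coeff_same_modsq:
  assumes a0: "poly a 0 \<noteq> 0" and b0: "poly b 0 \<noteq> 0" and ab: "same_modsq a b"
  defines "P \<equiv> prod_mset (proots a - proots a \<inter># proots b)"
  shows "\<exists>u. norm u = 1 \<and> lead_coeff b = u * lead_coeff a * of_real (norm P)"
proof -
  define I where "I = proots a \<inter># proots b"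
  have "norm (lead_coeff a) * norm (poly a 0) = norm (lead_coeff b) * norm (poly b 0)"
    using ab a0 b0 by (metis same_modsq_iff lead_coeff_modsq_poly complex_mod_cnj norm_mult)
  then have "norm (lead_coeff a) ^ 2 * norm (prod_mset (proots a))
      = norm (lead_coeff b) ^ 2 * norm (prod_mset (proots b))"
    by (simp add: poly_0_eq_prod_proots[of a] poly_0_eq_prod_proots[of b] norm_mult norm_power
        power2_eq_square mult_ac)
  moreover have "prod_mset (proots a) = P * prod_mset I"
    unfolding P_def I_def by (metis prod_mset.union subset_mset.diff_add subset_mset.inf.cobounded1)
  moreover have "prod_mset (proots b) = refl_T P * prod_mset I"
  proof -
    have "proots b - I = image_mset refl_T (proots a - I)"
      unfolding I_def
      by (rule diff_inter_eq_image_involution)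
        (simp_all add: proots_sym_eq_if_same_modsq[OF a0 b0 ab])
    then show ?thesis
      unfolding P_def I_def
      by (metis prod_mset.union prod_mset_image_refl_T subset_mset.diff_add
          subset_mset.inf.cobounded2)
  qed
  ultimately have "norm (lead_coeff a) ^ 2 * (norm P * norm (prod_mset I))
      = norm (lead_coeff b) ^ 2 * (inverse (norm P) * norm (prod_mset I))"
    by (simp add: norm_mult norm_refl_T)
  moreover have "prod_mset I \<noteq> 0" and "P \<noteq> 0"
    using zero_not_in_proots[OF a0] by (auto simp: I_def P_def dest: in_diffD)
  ultimately have "(norm (lead_coeff a) * norm P) ^ 2 = norm (lead_coeff b) ^ 2"
    by (simp add: field_simps power2_eq_square)
  then have "norm (lead_coeff b) = norm (lead_coeff a) * norm P"
    by (simp add: power2_eq_imp_eq)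
  moreover have "lead_coeff a \<noteq> 0"
    using a0 by auto
  ultimately show ?thesis
    using \<open>P \<noteq> 0\<close>
    by (intro exI[of _ "lead_coeff b / (lead_coeff a * of_real (norm P))"])
      (simp add: norm_divide norm_mult)
qed

section \<open>Counting the solutions of \<open>S + S\<^bsup>refl\<^esup> = R\<close>\<close>

lemma filter_mset_image_mset_invariant:
  assumes "\<And>x. P (f x) \<longleftrightarrow> P x"
  shows "filter_mset P (image_mset f M) = image_mset f (filter_mset P M)"
  using image_mset_filter_mset_swap[of f P M] assms by simp

definition refl_halves :: "complex multiset \<Rightarrow> complex multiset set" where
  "refl_halves R = {S. S + image_mset refl_T S = R}"

lemma refl_halves_iff_count:
  "S \<in> refl_halves R \<longleftrightarrow> (\<forall>x. count S x + count S (refl_T x) = count R x)"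
  by (auto simp: refl_halves_def multiset_eq_iff count_image_refl_T)

lemma subset_mset_if_refl_halves: "S \<in> refl_halves R \<Longrightarrow> S \<subseteq># R"
  by (auto simp: refl_halves_def)

lemma refl_halves_fixed_point:
  assumes fixed: "refl_T \<alpha> = \<alpha>"
  shows "refl_halves (replicate_mset (2 * k) \<alpha>) = {replicate_mset k \<alpha>}"
proof -
  have other: "refl_T x \<noteq> \<alpha>" if "x \<noteq> \<alpha>" for x
    using that fixed by (metis refl_T_refl_T)
  have "S = replicate_mset k \<alpha>" if "S \<in> refl_halves (replicate_mset (2 * k) \<alpha>)" for S
  proof (rule multiset_eqI)
    fix x
    show "count S x = count (replicate_mset k \<alpha>) x"
      using that other[of x] fixed
      by (cases "x = \<alpha>") (auto simp: refl_halves_iff_count dest: spec[of _ x])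
  qed
  moreover have "replicate_mset k \<alpha> \<in> refl_halves (replicate_mset (2 * k) \<alpha>)"
    using other fixed by (auto simp: refl_halves_iff_count)
  ultimately show ?thesis
    by blast
qed

lemma refl_halves_pair:
  assumes "refl_T \<alpha> \<noteq> \<alpha>"
  defines "\<beta> \<equiv> refl_T \<alpha>"
  shows "refl_halves (replicate_mset n \<alpha> + replicate_mset n \<beta>)
    = (\<lambda>i. replicate_mset i \<alpha> + replicate_mset (n - i) \<beta>) ` {0..n}"
proof -
  have ne: "\<alpha> \<noteq> \<beta>" and refl_\<beta>: "refl_T \<beta> = \<alpha>"
    using assms by simp_all
  have other: "refl_T x \<noteq> \<alpha>" "refl_T x \<noteq> \<beta>" if "x \<noteq> \<alpha>" "x \<noteq> \<beta>" for x
    using that refl_\<beta> by (metis refl_T_refl_T)+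
  have "S = replicate_mset (count S \<alpha>) \<alpha> + replicate_mset (n - count S \<alpha>) \<beta> \<and> count S \<alpha> \<le> n"
    if "S \<in> refl_halves (replicate_mset n \<alpha> + replicate_mset n \<beta>)" for S
  proof -
    have c: "count S x + count S (refl_T x)
        = count (replicate_mset n \<alpha> + replicate_mset n \<beta>) x" for x
      using that by (simp add: refl_halves_iff_count)
    have "count S \<alpha> + count S \<beta> = n"
      using c[of \<alpha>] ne by (simp add: \<beta>_def)
    moreover have "count S x = 0" if "x \<noteq> \<alpha>" "x \<noteq> \<beta>" for x
      using c[of x] that by simp
    ultimately show ?thesis
      using ne by (auto simp: multiset_eq_iff)
  qed
  moreover have "replicate_mset i \<alpha> + replicate_mset (n - i) \<beta>
      \<in> refl_halves (replicate_mset n \<alpha> + replicate_mset n \<beta>)" if "i \<le> n" for i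
    using that ne refl_\<beta> other by (auto simp: refl_halves_iff_count \<beta>_def)
  ultimately show ?thesis
    by (auto intro!: image_eqI)
qed

lemma card_refl_halves_pair:
  assumes "refl_T \<alpha> \<noteq> \<alpha>"
  shows "card (refl_halves (replicate_mset n \<alpha> + replicate_mset n (refl_T \<alpha>))) = n + 1"
proof -
  have "inj_on (\<lambda>i. replicate_mset i \<alpha> + replicate_mset (n - i) (refl_T \<alpha>)) {0..n}"
    using assms by (intro inj_onI) (metis count_replicate_mset count_union add_0_right)
  then show ?thesis
    using assms by (simp add: refl_halves_pair card_image)
qed

lemma eq_class_add_image_refl_T_fixed:
  assumes "refl_T \<alpha> = \<alpha>"
  shows "eq_class (A + image_mset refl_T A) \<alpha> = replicate_mset (2 * count A \<alpha>) \<alpha>"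
  using assms by (auto simp: eq_class_def multiset_eq_iff count_image_refl_T)

lemma eq_class_add_image_refl_T_pair:
  fixes A :: "complex multiset"
  assumes "refl_T \<alpha> \<noteq> \<alpha>"
  defines "n \<equiv> count A \<alpha> + count A (refl_T \<alpha>)"
  shows "eq_class (A + image_mset refl_T A) \<alpha> = replicate_mset n \<alpha> + replicate_mset n (refl_T \<alpha>)"
  using assms by (auto simp: eq_class_def multiset_eq_iff count_image_refl_T)

lemma card_refl_halves_eq_class:
  fixes A :: "complex multiset"
  assumes "\<alpha> \<in># A" and "\<alpha> \<noteq> 0"
  defines "y \<equiv> eq_class (A + image_mset refl_T A) \<alpha>"
  shows "card (refl_halves y) = sharp y"
proof (cases "norm \<alpha> = 1")
  case True
  then have "refl_T \<alpha> = \<alpha>"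
    using assms(2) by (simp add: refl_T_eq_self_iff)
  then have "y = replicate_mset (2 * count A \<alpha>) \<alpha>"
    unfolding y_def by (rule eq_class_add_image_refl_T_fixed)
  with \<open>refl_T \<alpha> = \<alpha>\<close> True assms(1) show ?thesis
    by (auto simp: refl_halves_fixed_point sharp_def)
next
  case False
  then have "refl_T \<alpha> \<noteq> \<alpha>" and "norm (refl_T \<alpha>) \<noteq> 1"
    using assms(2) by (simp_all add: refl_T_eq_self_iff norm_refl_T)
  from this(1) have "y = replicate_mset (count A \<alpha> + count A (refl_T \<alpha>)) \<alpha>
      + replicate_mset (count A \<alpha> + count A (refl_T \<alpha>)) (refl_T \<alpha>)"
    unfolding y_def by (rule eq_class_add_image_refl_T_pair)
  with \<open>refl_T \<alpha> \<noteq> \<alpha>\<close> \<open>norm (refl_T \<alpha>) \<noteq> 1\<close> False show ?thesis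
    by (auto simp: card_refl_halves_pair sharp_def)
qed

lemma classes_split_eq_class:
  assumes "\<alpha> \<in># R"
  defines "P \<equiv> \<lambda>x. x = \<alpha> \<or> x = refl_T \<alpha>"
  shows "classes R = insert (eq_class R \<alpha>) (classes (filter_mset (\<lambda>x. \<not> P x) R))"
    and "eq_class R \<alpha> \<notin> classes (filter_mset (\<lambda>x. \<not> P x) R)"
proof -
  let ?R' = "filter_mset (\<lambda>x. \<not> P x) R"
  have same_class: "eq_class R x = eq_class R \<alpha>" if "P x" for x
  proof -
    have "(\<lambda>\<beta>. \<beta> = x \<or> \<beta> = refl_T x) = P"
      using that unfolding P_def by auto
    then show ?thesis
      by (simp add: eq_class_def P_def)
  qed
  have restrict: "eq_class R x = eq_class ?R' x" if "x \<in># ?R'" for x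
  proof -
    have "\<not> P x"
      using that by simp
    then have "(\<lambda>\<beta>. \<not> P \<beta> \<and> (\<beta> = x \<or> \<beta> = refl_T x)) = (\<lambda>\<beta>. \<beta> = x \<or> \<beta> = refl_T x)"
      unfolding P_def by (auto simp: fun_eq_iff refl_T_eq_iff)
    then show ?thesis
      by (simp add: eq_class_def filter_filter_mset)
  qed
  have "set_mset R = set_mset (filter_mset P R) \<union> set_mset ?R'"
    by auto
  then have "classes R = eq_class R ` set_mset (filter_mset P R) \<union> eq_class R ` set_mset ?R'"
    unfolding classes_def by (simp only: image_Un)
  also have "eq_class R ` set_mset (filter_mset P R)
      = (\<lambda>_. eq_class R \<alpha>) ` set_mset (filter_mset P R)"
    by (rule image_cong[OF refl], rule same_class) simp
  also have "\<dots> = {eq_class R \<alpha>}"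
    using assms(1) by (auto simp: P_def image_constant_conv)
  also have "eq_class R ` set_mset ?R' = classes ?R'"
    unfolding classes_def using restrict by (rule image_cong[OF refl])
  finally show "classes R = insert (eq_class R \<alpha>) (classes ?R')"
    by simp
  have "\<alpha> \<in># eq_class R \<alpha>"
    using assms(1) by (simp add: eq_class_def)
  moreover have "\<alpha> \<notin># eq_class ?R' x" for x
    by (simp add: eq_class_def P_def)
  ultimately show "eq_class R \<alpha> \<notin> classes ?R'"
    unfolding classes_def by (metis imageE)
qed

lemma count_N_split_eq_class:
  assumes "\<alpha> \<in># R"
  shows "count_N R
    = sharp (eq_class R \<alpha>) * count_N (filter_mset (\<lambda>x. \<not> (x = \<alpha> \<or> x = refl_T \<alpha>)) R)"
  using classes_split_eq_class[OF assms] by (simp add: count_N_def classes_def)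

lemma filter_mset_refl_halves:
  assumes "S \<in> refl_halves R" and "\<And>x. Q (refl_T x) \<longleftrightarrow> Q x"
  shows "filter_mset Q S \<in> refl_halves (filter_mset Q R)"
proof -
  have "filter_mset Q S + image_mset refl_T (filter_mset Q S)
      = filter_mset Q (S + image_mset refl_T S)"
    using assms(2) by (simp add: filter_mset_image_mset_invariant)
  with assms(1) show ?thesis
    by (simp add: refl_halves_def)
qed

lemma filter_mset_refl_halves_filter:
  assumes "S \<in> refl_halves (filter_mset P R)"
  shows "filter_mset P S = S" and "filter_mset (\<lambda>x. \<not> P x) S = {#}"
  using subset_mset_if_refl_halves[OF assms]
  by (auto simp: filter_mset_eq_conv dest: mset_subset_eqD)

lemma add_mem_refl_halves_filter:
  assumes "T \<in> refl_halves (filter_mset P R)" and "U \<in> refl_halves (filter_mset (\<lambda>x. \<not> P x) R)"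
  shows "T + U \<in> refl_halves R"
proof -
  have "(T + U) + image_mset refl_T (T + U) = (T + image_mset refl_T T) + (U + image_mset refl_T U)"
    by (simp add: ac_simps)
  also have "\<dots> = R"
    using assms by (simp add: refl_halves_def flip: multiset_partition)
  finally show ?thesis
    by (simp add: refl_halves_def)
qed

lemma card_refl_halves_filter:
  assumes invariant: "\<And>x. P (refl_T x) \<longleftrightarrow> P x"
  shows "card (refl_halves R)
    = card (refl_halves (filter_mset P R)) * card (refl_halves (filter_mset (\<lambda>x. \<not> P x) R))"
proof -
  let ?halves = "refl_halves (filter_mset P R) \<times> refl_halves (filter_mset (\<lambda>x. \<not> P x) R)"
  let ?split = "\<lambda>S. (filter_mset P S, filter_mset (\<lambda>x. \<not> P x) S)"
  have "bij_betw ?split (refl_halves R) ?halves"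
  proof (rule bij_betw_byWitness[where f' = "\<lambda>(T, U). T + U"])
    show "\<forall>S \<in> refl_halves R. (\<lambda>(T, U). T + U) (?split S) = S"
      by (simp flip: multiset_partition)
    show "\<forall>TU \<in> ?halves. ?split ((\<lambda>(T, U). T + U) TU) = TU"
    proof safe
      fix T U
      assume T: "T \<in> refl_halves (filter_mset P R)"
        and U: "U \<in> refl_halves (filter_mset (\<lambda>x. \<not> P x) R)"
      show "filter_mset P (T + U) = T" and "filter_mset (\<lambda>x. \<not> P x) (T + U) = U"
        using filter_mset_refl_halves_filter[OF T] filter_mset_refl_halves_filter[OF U] by simp_all
    qed
    have "(\<lambda>x. \<not> P (refl_T x)) = (\<lambda>x. \<not> P x)"
      using invariant by simp
    then show "?split ` refl_halves R \<subseteq> ?halves"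
      using invariant by (auto intro: filter_mset_refl_halves)
    show "(\<lambda>(T, U). T + U) ` ?halves \<subseteq> refl_halves R"
      by (auto intro: add_mem_refl_halves_filter)
  qed
  then show ?thesis
    by (simp add: bij_betw_same_card card_cartesian_product)
qed

lemma card_refl_halves_add_image_refl_T:
  "0 \<notin># A \<Longrightarrow> card (refl_halves (A + image_mset refl_T A)) = count_N (A + image_mset refl_T A)"
proof (induction "size A" arbitrary: A rule: less_induct)
  case less
  show ?case
  proof (cases "A = {#}")
    case True
    then show ?thesis
      by (simp add: refl_halves_def count_N_def classes_def)
  next
    case False
    then obtain \<alpha> where "\<alpha> \<in># A"
      by blast
    define P where "P = (\<lambda>x. x = \<alpha> \<or> x = refl_T \<alpha>)"
    define A' where "A' = filter_mset (\<lambda>x. \<not> P x) A"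
    have invariant: "P (refl_T x) \<longleftrightarrow> P x" for x
      unfolding P_def by (metis refl_T_refl_T)
    let ?R = "A + image_mset refl_T A"
    have alpha_class: "filter_mset P ?R = eq_class ?R \<alpha>"
      by (simp add: eq_class_def P_def)
    have rest_classes: "filter_mset (\<lambda>x. \<not> P x) ?R = A' + image_mset refl_T A'"
      using invariant by (simp add: A'_def filter_mset_image_mset_invariant)
    have "size A' < size A"
    proof (rule mset_subset_size)
      have "\<alpha> \<notin># A'"
        by (simp add: A'_def P_def)
      with \<open>\<alpha> \<in># A\<close> show "A' \<subset># A"
        by (metis A'_def multiset_filter_subset subset_mset.le_neq_trans)
    qed
    moreover have "0 \<notin># A'" and "\<alpha> \<noteq> 0"
      using less.prems \<open>\<alpha> \<in># A\<close> by (auto simp: A'_def)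
    ultimately have IH:
      "card (refl_halves (A' + image_mset refl_T A')) = count_N (A' + image_mset refl_T A')"
      using less.hyps by blast
    have "card (refl_halves ?R)
        = card (refl_halves (eq_class ?R \<alpha>)) * card (refl_halves (A' + image_mset refl_T A'))"
      using card_refl_halves_filter[of P ?R, OF invariant] by (simp only: alpha_class rest_classes)
    also have "\<dots> = sharp (eq_class ?R \<alpha>) * count_N (A' + image_mset refl_T A')"
      by (simp only: IH card_refl_halves_eq_class[OF \<open>\<alpha> \<in># A\<close> \<open>\<alpha> \<noteq> 0\<close>])
    also have "\<dots> = count_N ?R"
      using count_N_split_eq_class[of \<alpha> ?R] \<open>\<alpha> \<in># A\<close> rest_classes by (simp add: P_def)
    finally show ?thesis .
  qed
qed

section \<open>Polynomials with a prescribed \<open>modsq_poly\<close>\<close>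

lemma infinite_unit_circle: "infinite (sphere (0 :: complex) 1)"
proof
  assume "finite (sphere (0 :: complex) 1)"
  moreover have "connected (sphere (0 :: complex) 1)"
    by (rule connected_sphere) simp
  ultimately have "sphere (0 :: complex) 1 = {} \<or> (\<exists>z. sphere (0 :: complex) 1 = {z})"
    using connected_finite_iff_sing by blast
  moreover have "1 \<in> sphere (0 :: complex) 1" and "-1 \<in> sphere (0 :: complex) 1"
    by simp_all
  ultimately show False
    by (metis empty_iff singletonD one_neq_neg_one)
qed

lemma exists_unit_circle_nonroot:
  fixes p :: "complex poly"
  assumes "p \<noteq> 0"
  obtains z where "norm z = 1" and "poly p z \<noteq> 0"
proof -
  have "\<not> sphere 0 1 \<subseteq> {z. poly p z = 0}"
    using infinite_unit_circle poly_roots_finite[OF assms] finite_subset by blast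
  then obtain z where "z \<in> sphere 0 1" and "poly p z \<noteq> 0"
    by blast
  with that show ?thesis
    by simp
qed

lemma modsq_poly_eq_smult_pos_if_proots_eq:
  assumes "p \<noteq> 0" and "q \<noteq> 0" and "degree p = degree q"
    and "proots (modsq_poly p) = proots (modsq_poly q)"
  shows "\<exists>r > 0. modsq_poly p = smult (of_real r) (modsq_poly q)"
proof -
  define t where "t = lead_coeff (modsq_poly p) / lead_coeff (modsq_poly q)"
  have p_eq: "modsq_poly p = smult t (modsq_poly q)"
    unfolding t_def using assms by (intro eq_smult_if_proots_eq) simp_all
  txt \<open>On the unit circle \<open>modsq_poly q\<close> is \<open>z\<^sup>m |q(z)|\<^sup>2\<close>, which makes the factor positive.\<close>
  obtain z where z: "norm z = 1" "poly q z \<noteq> 0"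
    using exists_unit_circle_nonroot[OF \<open>q \<noteq> 0\<close>] by blast
  then have "z \<noteq> 0"
    by auto
  have "z ^ degree q * of_real ((norm (poly p z))\<^sup>2)
      = t * (z ^ degree q * of_real ((norm (poly q z))\<^sup>2))"
    using arg_cong[OF p_eq, of "\<lambda>f. poly f z"] assms(3)
    by (simp add: poly_modsq_poly_unit_circle[OF z(1)] del: of_real_power)
  then have "t = of_real ((norm (poly p z))\<^sup>2 / (norm (poly q z))\<^sup>2)"
    using \<open>z \<noteq> 0\<close> z(2) by (simp add: field_simps del: of_real_power)
  moreover have "t \<noteq> 0"
    using assms(1,2) by (simp add: t_def)
  ultimately show ?thesis
    using p_eq by (intro exI[of _ "(norm (poly p z))\<^sup>2 / (norm (poly q z))\<^sup>2"]) auto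
qed

lemma exists_rotation_to_positive:
  fixes w :: complex
  assumes "w \<noteq> 0" and "s \<ge> 0"
  shows "\<exists>k. norm k = s \<and> k * w = of_real (s * norm w)"
proof (intro exI conjI)
  have "of_real (s / norm w) * cnj w * w = of_real (s / norm w) * of_real ((norm w)\<^sup>2)"
    by (simp add: complex_norm_square mult.assoc del: of_real_power)
  also have "\<dots> = of_real (s / norm w * (norm w)\<^sup>2)"
    by (simp only: of_real_mult)
  also have "s / norm w * (norm w)\<^sup>2 = s * norm w"
    using assms by (simp add: power2_eq_square)
  finally show "of_real (s / norm w) * cnj w * w = of_real (s * norm w)" .
  show "norm (of_real (s / norm w) * cnj w) = s"
    using assms by (simp add: norm_mult norm_divide)
qed

lemma eq_if_proots_eq_modsq_poly_eq:
  fixes p q :: "complex poly"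
  assumes "modsq_poly p = modsq_poly q" and "proots p = proots q"
    and "poly p 0 \<in> \<real>" and "Re (poly p 0) > 0" and "poly q 0 \<in> \<real>" and "Re (poly q 0) > 0"
  shows "p = q"
proof -
  have "p \<noteq> 0"
    using assms(4) by auto
  define t where "t = lead_coeff q / lead_coeff p"
  have q_eq: "q = smult t p"
    unfolding t_def using \<open>p \<noteq> 0\<close> assms(2) by (rule eq_smult_if_proots_eq)
  have "of_real ((norm t)\<^sup>2) * lead_coeff (modsq_poly p) = lead_coeff (modsq_poly p)"
    using assms(1) by (metis q_eq modsq_poly_smult lead_coeff_smult)
  then have "norm t = 1"
    using \<open>p \<noteq> 0\<close> by (simp add: abs_square_eq_1 del: of_real_power)
  obtain x y where x: "poly p 0 = of_real x" "x > 0" and y: "poly q 0 = of_real y" "y > 0"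
    using assms(3-6) by (auto elim!: Reals_cases)
  moreover have "poly q 0 = t * poly p 0"
    by (simp add: q_eq)
  ultimately have "t = of_real (y / x)"
    by (simp add: field_simps)
  with \<open>norm t = 1\<close> x y have "t = 1"
    by (simp add: norm_divide abs_of_pos)
  then show ?thesis
    by (simp add: q_eq)
qed

lemma exists_same_modsq_with_proots:
  assumes a0: "poly a 0 \<noteq> 0"
    and S: "S \<in> refl_halves (proots a + image_mset refl_T (proots a))"
  shows "\<exists>c. poly c 0 \<noteq> 0 \<and> same_modsq a c \<and> poly c 0 \<in> \<real> \<and> Re (poly c 0) > 0 \<and> proots c = S"
proof -
  define p where "p = root_poly S"
  have "0 \<notin># proots a + image_mset refl_T (proots a)"
    using zero_not_in_proots[OF a0] by (simp only: union_iff zero_in_image_refl_T_iff) simp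
  then have "0 \<notin># S"
    using subset_mset_if_refl_halves[OF S] by (auto dest: mset_subset_eqD)
  then have p0: "poly p 0 \<noteq> 0"
    by (simp add: p_def poly_root_poly_0)
  have "2 * size S = 2 * degree a"
    using arg_cong[OF S[unfolded refl_halves_def mem_Collect_eq], of size]
    by (simp add: size_proots_complex)
  then have "degree p = degree a"
    by (simp add: p_def)
  moreover have "proots (modsq_poly a) = proots (modsq_poly p)"
    using S a0 p0 by (simp add: proots_modsq_poly p_def refl_halves_def)
  ultimately obtain r where "r > 0" and a_eq: "modsq_poly a = smult (of_real r) (modsq_poly p)"
    using modsq_poly_eq_smult_pos_if_proots_eq a0 p0 by (metis poly_0)
  obtain k where k: "norm k = sqrt r" "k * poly p 0 = of_real (sqrt r * norm (poly p 0))"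
    using exists_rotation_to_positive[OF p0, of "sqrt r"] \<open>r > 0\<close> by auto
  then have "k \<noteq> 0"
    using \<open>r > 0\<close> by auto
  define c where "c = smult k p"
  have "modsq_poly c = modsq_poly a"
    using k \<open>r > 0\<close> by (simp add: c_def a_eq modsq_poly_smult)
  moreover have "degree c = degree a"
    using \<open>k \<noteq> 0\<close> \<open>degree p = degree a\<close> by (simp add: c_def)
  moreover have c0: "poly c 0 = of_real (sqrt r * norm (poly p 0))"
    using k by (simp add: c_def)
  moreover have "poly c 0 \<noteq> 0"
    using c0 p0 \<open>r > 0\<close> by simp
  ultimately have "same_modsq a c"
    using a0 by (simp add: same_modsq_iff)
  moreover have "proots c = S"
    using \<open>k \<noteq> 0\<close> by (simp add: c_def p_def)
  ultimately show ?thesis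
    using c0 p0 \<open>r > 0\<close> \<open>poly c 0 \<noteq> 0\<close> by (intro exI[of _ c]) simp
qed

lemma card_same_modsq_pos:
  assumes a0: "poly a 0 \<noteq> 0"
  shows "card {c. poly c 0 \<noteq> 0 \<and> same_modsq a c \<and> poly c 0 \<in> \<real> \<and> Re (poly c 0) > 0}
    = card (refl_halves (proots a + image_mset refl_T (proots a)))"
proof (rule bij_betw_same_card, rule bij_betw_imageI)
  let ?C = "{c. poly c 0 \<noteq> 0 \<and> same_modsq a c \<and> poly c 0 \<in> \<real> \<and> Re (poly c 0) > 0}"
  show "inj_on proots ?C"
  proof (rule inj_onI)
    fix c1 c2
    assume c1: "c1 \<in> ?C" and c2: "c2 \<in> ?C" and "proots c1 = proots c2"
    moreover have "modsq_poly c1 = modsq_poly c2"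
      using c1 c2 same_modsq_iff[OF a0, of c1] same_modsq_iff[OF a0, of c2] by simp
    ultimately show "c1 = c2"
      by (auto intro: eq_if_proots_eq_modsq_poly_eq)
  qed
  show "proots ` ?C = refl_halves (proots a + image_mset refl_T (proots a))"
    using a0 exists_same_modsq_with_proots[OF a0]
    by (auto simp: refl_halves_def proots_sym_eq_if_same_modsq)
qed

lemma same_modsq_uminus [simp]: "same_modsq a (- c) \<longleftrightarrow> same_modsq a c"
  by (simp add: same_modsq_def star_eval_def)

lemma card_same_modsq_neg_eq_pos:
  "card {c. poly c 0 \<noteq> 0 \<and> same_modsq a c \<and> poly c 0 \<in> \<real> \<and> Re (poly c 0) < 0}
    = card {c. poly c 0 \<noteq> 0 \<and> same_modsq a c \<and> poly c 0 \<in> \<real> \<and> Re (poly c 0) > 0}"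
proof -
  have "{c. poly c 0 \<noteq> 0 \<and> same_modsq a c \<and> poly c 0 \<in> \<real> \<and> Re (poly c 0) < 0}
      = uminus ` {c. poly c 0 \<noteq> 0 \<and> same_modsq a c \<and> poly c 0 \<in> \<real> \<and> Re (poly c 0) > 0}"
    by (auto intro: image_eqI[of _ uminus "- _"])
  then show ?thesis
    by (simp add: card_image)
qed

theorem lemmaA1:
  fixes a b :: "complex poly"
  assumes a0: "poly a 0 \<noteq> 0" and b0: "poly b 0 \<noteq> 0"
    and hyp: "same_modsq a b"
  defines "Ra \<equiv> proots a" and "Rb \<equiv> proots b"
    and "Rab \<equiv> proots a \<inter># proots b"
    and "Ra' \<equiv> proots a - (proots a \<inter># proots b)"
    and "Rb' \<equiv> proots b - (proots a \<inter># proots b)"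
  shows "(degree a = degree b)
       \<and> (Ra + image_mset refl_T Ra = Rb + image_mset refl_T Rb)
       \<and> (\<forall>z. norm z = 1 \<longrightarrow> count Ra z = count Rab z \<and> count Rb z = count Rab z)
       \<and> (\<forall>z\<in>#Ra'. norm z \<noteq> 1) \<and> (\<forall>z\<in>#Rb'. norm z \<noteq> 1)
       \<and> (\<forall>y\<in>#Ra'. y \<notin># Rb' \<and> refl_T y \<notin># Ra' \<and> count Rb' (refl_T y) = count Ra' y)
       \<and> (\<forall>y\<in>#Rb'. y \<notin># Ra' \<and> refl_T y \<notin># Rb' \<and> count Ra' (refl_T y) = count Rb' y)
       \<and> (size Ra' = size Rb')
       \<and> (prod_mset Ra' = prod_mset (image_mset refl_T Rb'))
       \<and> (\<exists>u. norm u = 1 \<and>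
           lead_coeff b = u * lead_coeff a * complex_of_real (norm (prod_mset Ra')))
       \<and> (card {c :: complex poly. poly c 0 \<noteq> 0 \<and> same_modsq a c \<and>
                 poly c 0 \<in> \<real> \<and> Re (poly c 0) > 0}
           = count_N (Ra + image_mset refl_T Ra))
       \<and> (card {c :: complex poly. poly c 0 \<noteq> 0 \<and> same_modsq a c \<and>
                 poly c 0 \<in> \<real> \<and> Re (poly c 0) < 0}
           = count_N (Ra + image_mset refl_T Ra))"
proof -
  note involution = refl_T_refl_T
  have Rab: "Rab = Ra \<inter># Rb" and Ra': "Ra' = Ra - Ra \<inter># Rb" and Rb': "Rb' = Rb - Ra \<inter># Rb"
    by (simp_all add: Ra_def Rb_def Rab_def Ra'_def Rb'_def)
  have sym: "Ra + image_mset refl_T Ra = Rb + image_mset refl_T Rb"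
    unfolding Ra_def Rb_def by (rule proots_sym_eq_if_same_modsq[OF a0 b0 hyp])
  have mirror: "Rb' = image_mset refl_T Ra'"
    unfolding Ra' Rb' by (rule diff_inter_eq_image_involution[OF involution sym])
  have circle: "count Ra z = count Rb z" if "norm z = 1" for z
    using count_eq_at_fixed_point_involution[OF involution sym refl_T_unit_circle[OF that]] .
  then have circle_counts: "\<forall>z. norm z = 1 \<longrightarrow> count Ra z = count Rab z \<and> count Rb z = count Rab z"
    by (simp add: Rab)
  have off_circle: "(\<forall>z\<in>#Ra'. norm z \<noteq> 1) \<and> (\<forall>z\<in>#Rb'. norm z \<noteq> 1)"
    using circle by (auto simp: Ra' Rb' in_diff_count)
  have Ra'_mirror: "\<forall>y\<in>#Ra'. y \<notin># Rb' \<and> refl_T y \<notin># Ra' \<and> count Rb' (refl_T y) = count Ra' y"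
    using diff_inter_involution_mirror[OF involution sym] by (simp add: Ra' Rb')
  have "Rb + image_mset refl_T Rb = Ra + image_mset refl_T Ra"
    using sym by simp
  then have Rb'_mirror: "\<forall>y\<in>#Rb'. y \<notin># Ra' \<and> refl_T y \<notin># Rb' \<and> count Ra' (refl_T y) = count Rb' y"
    using diff_inter_involution_mirror[OF involution] by (simp add: Ra' Rb' subset_mset.inf_commute)
  have sizes: "size Ra' = size Rb'"
    and products: "prod_mset Ra' = prod_mset (image_mset refl_T Rb')"
    by (simp_all add: mirror multiset.map_comp comp_def)
  have count_pos: "card {c. poly c 0 \<noteq> 0 \<and> same_modsq a c \<and> poly c 0 \<in> \<real> \<and> Re (poly c 0) > 0}
      = count_N (Ra + image_mset refl_T Ra)"
    unfolding Ra_def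
    by (simp add: card_same_modsq_pos[OF a0] card_refl_halves_add_image_refl_T
        zero_not_in_proots[OF a0])
  show ?thesis
    using degree_eq_if_same_modsq[OF a0 b0 hyp] sym circle_counts off_circle Ra'_mirror Rb'_mirror
      sizes products lead_coeff_same_modsq[OF a0 b0 hyp, folded Ra'_def] count_pos
      card_same_modsq_neg_eq_pos[of a]
    by simp
qed

end
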